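(* Let $0<p<1$ and let $\mu$ be a finite Borel measure on $S^{n-1}$ not concentrated in any closed hemisphere, and let $\mathfrak C_p(\mu)>0$ be a constant such that $\int_{S^{n-1}}(u\cdot v)_+^p\,d\mu(v)\ge\mathfrak C_p(\mu)$ for every $u\in S^{n-1}$. Let $\overline\mu_m$ be constructed as in the context. Then for all sufficiently large $m$, $$\int_{S^{n-1}}(u\cdot v)_+^p\,d\overline\mu_m(v)\ge\tfrac12\mathfrak C_p(\mu)\quad\text{for every }u\in S^{n-1}.$$
   Context: $(t)_+=\max\{t,0\}$; $|\nu|$ is total mass. Construction: for each positive integer $m$, $U_{1,m},\dots,U_{\mathcal N_m,m}$ is a partition of $S^{n-1}$ into Borel sets each of diameter less than $1/m$ and with nonempty interior relative to $S^{n-1}$, $v_{i,m}\in U_{i,m}$ are chosen in general position in dimension $n$, $\mu_m=\sum_{i=1}^{\mathcal N_m}(\mu(U_{i,m})+\mathcal N_m^{-2})\delta_{v_{i,m}}$ and $\overline\mu_m=\frac{|\mu|}{|\mu_m|}\mu_m$. *)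

theory Defs
  imports "HOL-Analysis.Analysis"
begin

definition pos_pow :: "real \<Rightarrow> real \<Rightarrow> real" where
  "pos_pow p t = (max t 0) powr p"

definition discrete_measure :: "nat \<Rightarrow> (nat \<Rightarrow> 'a::topological_space) \<Rightarrow> (nat \<Rightarrow> real) \<Rightarrow> 'a measure" where
  "discrete_measure N V w =
     measure_of UNIV (sets borel) (\<lambda>A. \<Sum>i<N. ennreal (w i) * indicator A (V i))"

definition general_position :: "(nat \<Rightarrow> 'a::euclidean_space) \<Rightarrow> nat set \<Rightarrow> bool" where
  "general_position V I \<longleftrightarrow>
     (\<forall>J. J \<subseteq> I \<and> card J \<le> DIM('a) \<longrightarrow> inj_on V J \<and> independent (V ` J))"

text \<open>A finite Borel measure on the unit sphere (as a measure on the ambient space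
  vanishing off the sphere).\<close>
definition finite_borel_measure_on_sphere :: "'a::euclidean_space measure \<Rightarrow> bool" where
  "finite_borel_measure_on_sphere \<mu> \<longleftrightarrow>
     sets \<mu> = sets borel \<and> finite_measure \<mu> \<and> emeasure \<mu> (- sphere 0 1) = 0"

text \<open>mu is concentrated in the closed hemisphere {v. u . v \<ge> 0} iff the complementary
  open hemisphere is null.\<close>
definition not_concentrated_in_hemisphere :: "'a::euclidean_space measure \<Rightarrow> bool" where
  "not_concentrated_in_hemisphere \<mu> \<longleftrightarrow>
     (\<forall>u\<in>sphere 0 1. emeasure \<mu> {v\<in>sphere 0 1. u \<bullet> v < 0} \<noteq> 0)"

end

theory Submission
  imports Defs
begin

text \<open>
  Since \<open>t \<mapsto> (t)\<^sub>+\<^sup>p\<close> is \<open>p\<close>-Hoelder, on a cell \<open>U\<^sub>i\<close> of diameter \<open>< 1/m\<close> the integrand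
  \<open>(u \<bullet> w)\<^sub>+\<^sup>p\<close> differs from its value at \<open>v\<^sub>i\<close> by at most \<open>m\<^sup>-\<^sup>p\<close>, so the Riemann sum
  \<open>\<Sum>\<^sub>i \<mu>(U\<^sub>i) (u \<bullet> v\<^sub>i)\<^sub>+\<^sup>p\<close> is at least \<open>C - m\<^sup>-\<^sup>p |\<mu>|\<close>. The extra weights \<open>N\<^sup>-\<^sup>2\<close> raise the
  total mass by \<open>1/N\<close> and contribute at least \<open>N\<^sup>-\<^sup>2 (1 - 1/m)\<close> through the centre nearest to \<open>u\<close>.
  In dimension at least 2 the sphere contains \<open>2m + 1\<close> points at mutual distance \<open>\<ge> 1/m\<close>, so
  \<open>N > 2m\<close> and the normalising factor \<open>|\<mu>| / (|\<mu>| + 1/N)\<close> tends to 1; in dimension 1 there are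
  at most two cells and the mass added near \<open>u\<close> compensates for the normalisation.
\<close>

lemma sets_discrete_measure [simp, measurable_cong]:
  "sets (discrete_measure N V w) = sets borel"
  by (simp add: discrete_measure_def) (metis space_borel sets.sigma_sets_eq)

lemma discrete_measure_eq_distr:
  fixes V :: "nat \<Rightarrow> 'a::topological_space"
  shows "discrete_measure N V w = distr (density (count_space {..<N}) (\<lambda>i. ennreal (w i))) borel V"
    (is "_ = ?M")
proof -
  have "?M = measure_of UNIV (sets borel) (emeasure ?M)"
    using measure_of_of_measure[of ?M] by simp
  also have "\<dots> = discrete_measure N V w"
    unfolding discrete_measure_def
  proof (rule measure_of_eq)
    fix A :: "'a set"
    assume "A \<in> sigma_sets UNIV (sets borel)"
    then have A: "A \<in> sets borel"
      by (metis space_borel sets.sigma_sets_eq)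
    have "emeasure ?M A
        = (\<integral>\<^sup>+ i. ennreal (w i) * indicator (V -` A \<inter> {..<N}) i \<partial>count_space {..<N})"
      using A by (simp add: emeasure_distr emeasure_density)
    also have "\<dots> = (\<Sum>i<N. ennreal (w i) * indicator A (V i))"
      by (auto simp: nn_integral_count_space_finite indicator_def intro!: sum.cong)
    finally show "emeasure ?M A = (\<Sum>i<N. ennreal (w i) * indicator A (V i))" .
  qed simp
  finally show ?thesis
    by simp
qed

lemma nn_integral_discrete_measure:
  assumes "f \<in> borel_measurable borel"
  shows "(\<integral>\<^sup>+x. f x \<partial>discrete_measure N V w) = (\<Sum>i<N. ennreal (w i) * f (V i))"
  using assms unfolding discrete_measure_eq_distr
  by (simp add: nn_integral_distr nn_integral_density nn_integral_count_space_finite)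

lemma integral_scaled_discrete_measure:
  fixes f :: "'a::topological_space \<Rightarrow> real"
  assumes f: "f \<in> borel_measurable borel" "\<And>x. 0 \<le> f x"
    and r: "0 \<le> r" and w: "\<And>i. i < N \<Longrightarrow> 0 \<le> w i"
  shows "(\<integral>x. f x \<partial>scale_measure (ennreal r) (discrete_measure N V w))
       = r * (\<Sum>i<N. w i * f (V i))"
proof -
  have "(\<Sum>i<N. ennreal (w i) * ennreal (f (V i))) = ennreal (\<Sum>i<N. w i * f (V i))"
    using w f by (subst sum_ennreal[symmetric]) (auto simp: ennreal_mult' intro!: sum.cong)
  moreover have "0 \<le> (\<Sum>i<N. w i * f (V i))"
    using w f by (intro sum_nonneg) auto
  ultimately show ?thesis
    using f r
    by (simp add: integral_eq_nn_integral nn_integral_scale_measure nn_integral_discrete_measure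
        ennreal_mult'[symmetric])
qed

lemma integral_normalized_perturbed_discrete_measure:
  fixes f :: "'a::topological_space \<Rightarrow> real"
  assumes f: "f \<in> borel_measurable borel" "\<And>x. 0 \<le> f x"
    and a: "\<And>i. i < n \<Longrightarrow> 0 \<le> a i" and n: "0 < n" and s: "0 \<le> s"
  shows "(\<integral>x. f x \<partial>scale_measure (ennreal (s / (\<Sum>i<n. a i + 1 / (real n)\<^sup>2)))
            (discrete_measure n V (\<lambda>i. a i + 1 / (real n)\<^sup>2)))
       = s / ((\<Sum>i<n. a i) + 1 / n) * ((\<Sum>i<n. a i * f (V i)) + (\<Sum>i<n. f (V i)) / (real n)\<^sup>2)"
proof -
  have "(\<Sum>i<n. a i + 1 / (real n)\<^sup>2) = (\<Sum>i<n. a i) + 1 / n"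
    using n by (simp add: sum.distrib power2_eq_square)
  moreover have "(\<Sum>i<n. (a i + 1 / (real n)\<^sup>2) * f (V i))
      = (\<Sum>i<n. a i * f (V i)) + (\<Sum>i<n. f (V i)) / (real n)\<^sup>2"
    by (simp add: algebra_simps sum.distrib sum_divide_distrib)
  moreover have "0 \<le> (\<Sum>i<n. a i)"
    using a by (intro sum_nonneg) auto
  ultimately show ?thesis
    using f a s by (subst integral_scaled_discrete_measure) auto
qed

lemma pos_pow_nonneg: "0 \<le> pos_pow p t"
  by (simp add: pos_pow_def)

lemma pos_pow_le_1: "t \<le> 1 \<Longrightarrow> 0 < p \<Longrightarrow> pos_pow p t \<le> 1"
  unfolding pos_pow_def by (intro powr_le1) auto

lemma le_powr_self: "0 \<le> (x::real) \<Longrightarrow> x \<le> 1 \<Longrightarrow> 0 < p \<Longrightarrow> p \<le> 1 \<Longrightarrow> x \<le> x powr p"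
  using powr_mono'[of p 1 x] by (cases "x = 0") auto

lemma le_pos_pow: "t \<le> 1 \<Longrightarrow> 0 < p \<Longrightarrow> p \<le> 1 \<Longrightarrow> t \<le> pos_pow p t"
  using le_powr_self[of t p] pos_pow_nonneg[of p t] by (cases "t \<le> 0") (auto simp: pos_pow_def)

lemma powr_add_le_add_powr:
  fixes a b p :: real
  assumes "0 \<le> a" "0 \<le> b" "0 < p" "p \<le> 1"
  shows "(a + b) powr p \<le> a powr p + b powr p"
proof (cases "a + b = 0")
  case False
  then have ab: "0 < a + b"
    using assms by simp
  have "1 = a / (a + b) + b / (a + b)"
    using ab by (simp add: add_divide_distrib[symmetric])
  also have "\<dots> \<le> (a / (a + b)) powr p + (b / (a + b)) powr p"
    using assms ab by (intro add_mono le_powr_self) auto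
  also have "\<dots> = (a powr p + b powr p) / (a + b) powr p"
    using assms by (simp add: powr_divide add_divide_distrib)
  finally show ?thesis
    using ab by (simp add: le_divide_eq)
qed (use assms in simp)

lemma pos_pow_le_add_abs_diff_powr:
  assumes "0 < p" "p \<le> 1"
  shows "pos_pow p x \<le> pos_pow p y + \<bar>x - y\<bar> powr p"
proof -
  have "max x 0 powr p \<le> (max y 0 + \<bar>x - y\<bar>) powr p"
    using assms by (intro powr_mono2) auto
  also have "\<dots> \<le> max y 0 powr p + \<bar>x - y\<bar> powr p"
    using assms by (intro powr_add_le_add_powr) auto
  finally show ?thesis
    by (simp add: pos_pow_def)
qed

lemma inner_ge_1_minus_dist:
  fixes u w :: "'a::real_inner"
  assumes "norm u = 1" "norm w = 1"
  shows "1 - dist u w \<le> u \<bullet> w"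
proof -
  have "(dist u w)\<^sup>2 = 2 - 2 * (u \<bullet> w)"
    using assms unfolding norm_eq_1
    by (simp add: dist_norm power2_norm_eq_inner inner_diff_left inner_diff_right inner_commute)
  moreover have "dist u w \<le> 2"
    using dist_triangle[of u w 0] assms by simp
  then have "(dist u w)\<^sup>2 \<le> 2 * dist u w"
    by (simp add: power2_eq_square mult_right_mono)
  ultimately show ?thesis
    by linarith
qed

lemma card_le_of_separated_points:
  fixes z :: "nat \<Rightarrow> 'a::metric_space"
  assumes cover: "\<And>k. k < K \<Longrightarrow> z k \<in> (\<Union>i<n. U i)"
    and small: "\<And>i x y. i < n \<Longrightarrow> x \<in> U i \<Longrightarrow> y \<in> U i \<Longrightarrow> dist x y < \<delta>"
    and separated: "\<And>k l. k < K \<Longrightarrow> l < K \<Longrightarrow> k \<noteq> l \<Longrightarrow> \<delta> \<le> dist (z k) (z l)"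
  shows "K \<le> n"
proof -
  have "\<exists>i<n. z k \<in> U i" if "k < K" for k
    using cover[OF that] by blast
  then obtain g where g: "\<And>k. k < K \<Longrightarrow> g k < n \<and> z k \<in> U (g k)"
    by metis
  have "inj_on g {..<K}"
  proof (rule inj_onI, rule ccontr)
    fix k l
    assume kl: "k \<in> {..<K}" "l \<in> {..<K}" "g k = g l" "k \<noteq> l"
    then have "dist (z k) (z l) < \<delta>"
      using g[of k] g[of l] by (intro small[of "g k"]) auto
    with separated[of k l] kl show False
      by simp
  qed
  moreover have "g ` {..<K} \<subseteq> {..<n}"
    using g by auto
  ultimately show ?thesis
    using card_inj_on_le[of g "{..<K}" "{..<n}"] by simp
qed

lemma sphere_separated_points:
  assumes "2 \<le> DIM('a)" "0 < m"
  obtains z :: "nat \<Rightarrow> 'a::euclidean_space"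
  where "\<And>k. k \<le> 2 * m \<Longrightarrow> z k \<in> sphere 0 1"
    and "\<And>k l. k \<noteq> l \<Longrightarrow> 1 / real m \<le> dist (z k) (z l)"
proof -
  obtain b1 :: 'a where b1: "b1 \<in> Basis"
    using nonempty_Basis by blast
  have "card (Basis - {b1}) \<noteq> 0"
    using assms(1) b1 by (simp add: card_Diff_singleton)
  then obtain b2 where "b2 \<in> Basis - {b1}"
    by (metis card.empty ex_in_conv)
  with b1 have b: "b1 \<in> Basis" "b2 \<in> Basis" "b1 \<noteq> b2"
    by auto
  define t where "t k = real k / real m - 1" for k
  define z where "z k = t k *\<^sub>R b1 + sqrt (1 - (t k)\<^sup>2) *\<^sub>R b2" for k
  show ?thesis
  proof
    fix k
    assume "k \<le> 2 * m"
    then have "real k / real m \<le> 2"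
      using assms(2) by (simp add: divide_le_eq)
    moreover have "0 \<le> real k / real m"
      by simp
    ultimately have "\<bar>t k\<bar> \<le> 1"
      unfolding t_def by linarith
    then have "(t k)\<^sup>2 \<le> 1"
      by (simp add: abs_square_le_1)
    then have "z k \<bullet> z k = 1"
      using b by (simp add: z_def inner_add_left inner_add_right inner_Basis power2_eq_square)
    then show "z k \<in> sphere 0 1"
      by (simp add: norm_eq_1)
  next
    fix k l :: nat
    assume "k \<noteq> l"
    then have "1 / real m \<le> \<bar>t k - t l\<bar>"
      using assms(2) by (auto simp: t_def diff_divide_distrib[symmetric] divide_right_mono)
    also have "t k - t l = (z k - z l) \<bullet> b1"
      using b by (simp add: z_def inner_diff_left inner_add_left inner_Basis)
    also have "\<bar>\<dots>\<bar> \<le> dist (z k) (z l)"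
      using b by (simp add: dist_norm Basis_le_norm)
    finally show "1 / real m \<le> dist (z k) (z l)" .
  qed
qed

lemma AE_in_sphere:
  assumes "finite_borel_measure_on_sphere \<mu>"
  shows "AE w in \<mu>. w \<in> sphere 0 1"
proof (rule AE_I')
  show "- sphere 0 1 \<in> null_sets \<mu>"
    using assms by (simp add: finite_borel_measure_on_sphere_def null_sets_def)
qed auto

lemma
  fixes \<mu> :: "'a::euclidean_space measure"
  assumes \<mu>: "finite_borel_measure_on_sphere \<mu>" and p: "0 < p" and u: "norm u \<le> 1"
  shows integrable_pos_pow_inner: "integrable \<mu> (\<lambda>w. pos_pow p (u \<bullet> w))"
    and integral_pos_pow_inner_le: "(\<integral>w. pos_pow p (u \<bullet> w) \<partial>\<mu>) \<le> measure \<mu> UNIV"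
proof -
  interpret finite_measure \<mu>
    using \<mu> by (simp add: finite_borel_measure_on_sphere_def)
  have sets: "sets \<mu> = sets borel"
    using \<mu> by (simp add: finite_borel_measure_on_sphere_def)
  have le_1: "AE w in \<mu>. pos_pow p (u \<bullet> w) \<le> 1"
    using AE_in_sphere[OF \<mu>]
  proof eventually_elim
    case (elim w)
    have "u \<bullet> w \<le> 1"
      using norm_cauchy_schwarz[of u w] u elim mult_left_le[of "norm u" "norm w"] by simp
    then show ?case
      using p by (rule pos_pow_le_1)
  qed
  have "(\<lambda>w. pos_pow p (u \<bullet> w)) \<in> borel_measurable \<mu>"
    unfolding measurable_cong_sets[OF sets refl] pos_pow_def by measurable
  then show int: "integrable \<mu> (\<lambda>w. pos_pow p (u \<bullet> w))"
    using le_1 by (intro integrable_const_bound[where B=1]) (auto simp: pos_pow_nonneg elim!: eventually_mono)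
  have "(\<integral>w. pos_pow p (u \<bullet> w) \<partial>\<mu>) \<le> (\<integral>w. 1 \<partial>\<mu>)"
    using le_1 by (intro integral_mono_AE int) auto
  then show "(\<integral>w. pos_pow p (u \<bullet> w) \<partial>\<mu>) \<le> measure \<mu> UNIV"
    using sets_eq_imp_space_eq[OF sets] by simp
qed

lemma discretization_bound_arith:
  fixes s C T A B \<delta> \<epsilon> :: real and n :: nat
  assumes C: "0 < C" "C \<le> s" and T: "0 \<le> T" "T \<le> s"
    and A: "C - \<epsilon> \<le> A" "\<epsilon> \<le> C / 4"
    and B: "0 \<le> B" "1 - \<delta> \<le> B" "0 \<le> \<delta>" "\<delta> \<le> C / 2"
    and n: "1 \<le> n" "n \<le> 2 \<or> 2 \<le> s * n"
  shows "C / 2 \<le> s / (T + 1 / n) * (A + B / (real n)\<^sup>2)"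
proof -
  have s: "0 < s"
    using C by linarith
  have sA: "s * (C - \<epsilon>) \<le> s * A"
    using A s by (intro mult_left_mono) auto
  have CT: "C * T \<le> C * s"
    using C T by (intro mult_left_mono) auto
  have "C * (T + 1 / n) \<le> 2 * s * (A + B / (real n)\<^sup>2)"
  proof (cases "n \<le> 2")
    case True
    then consider "n = 1" | "n = 2"
      using n by linarith
    then have "1 / n \<le> \<delta> + 2 * B / (real n)\<^sup>2"
      by cases (use B in auto)
    then have "s * (1 / n) \<le> s * (\<delta> + 2 * B / (real n)\<^sup>2)"
      using s by (intro mult_left_mono) auto
    moreover have "C * (1 / n) \<le> s * (1 / n)"
      using C by (intro mult_right_mono) auto
    moreover have "s * (2 * \<epsilon> + \<delta>) \<le> s * C"
      using A B s by (intro mult_left_mono) auto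
    ultimately show ?thesis
      using sA CT by (simp add: algebra_simps)
  next
    case False
    then have "1 / n \<le> s / 2"
      using n by (simp add: field_simps)
    then have "C * (1 / n) \<le> C * s / 2"
      using C mult_left_mono[of "1 / n" "s / 2" C] by simp
    moreover have "s * \<epsilon> \<le> C * s / 4"
      using A s mult_left_mono[of \<epsilon> "C / 4" s] by (simp add: mult.commute)
    ultimately have "C * (T + 1 / n) \<le> 2 * (s * (C - \<epsilon>))"
      using CT by (simp only: distrib_left right_diff_distrib mult.commute[of s C])
    also have "\<dots> \<le> 2 * s * A"
      using sA by simp
    also have "\<dots> \<le> 2 * s * (A + B / (real n)\<^sup>2)"
      using s B by (intro mult_left_mono) auto
    finally show ?thesis .
  qed
  moreover have "0 < T + 1 / n"
    using T n by (simp add: add_nonneg_pos)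
  ultimately show ?thesis
    by (simp add: field_simps)
qed

locale sphere_partition =
  fixes n :: nat and U :: "nat \<Rightarrow> 'a::euclidean_space set" and v :: "nat \<Rightarrow> 'a" and \<delta> :: real
  assumes sets_cell: "i < n \<Longrightarrow> U i \<in> sets borel"
    and disjoint_cells: "disjoint_family_on U {..<n}"
    and cells_cover: "(\<Union>i<n. U i) = sphere 0 1"
    and dist_in_cell: "i < n \<Longrightarrow> x \<in> U i \<Longrightarrow> y \<in> U i \<Longrightarrow> dist x y < \<delta>"
    and center_in_cell: "i < n \<Longrightarrow> v i \<in> U i"
begin

lemma center_in_sphere: "i < n \<Longrightarrow> v i \<in> sphere 0 1"
  using center_in_cell cells_cover by blast

lemma exists_near_center:
  assumes "u \<in> sphere 0 1"
  obtains i where "i < n" "dist u (v i) < \<delta>"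
  using assms cells_cover center_in_cell dist_in_cell by blast

lemma n_pos: "0 < n"
proof -
  obtain b :: 'a where "b \<in> Basis"
    using nonempty_Basis by blast
  then have "b \<in> sphere 0 1"
    by simp
  then show ?thesis
    by (metis exists_near_center gr_zeroI not_less0)
qed

lemma n_le_2_or_2m_less_n:
  fixes m :: nat
  assumes m: "0 < m" "\<delta> \<le> 1 / m"
  shows "n \<le> 2 \<or> 2 * m < n"
proof (cases "DIM('a) = 1")
  case True
  then obtain x y :: 'a where xy: "sphere 0 1 = {x, y}"
    by (metis sphere_1D_doubleton_zero zero_less_one)
  have "inj_on v {..<n}"
  proof (rule inj_onI, rule ccontr)
    fix i j
    assume "i \<in> {..<n}" "j \<in> {..<n}" "v i = v j" "i \<noteq> j"
    moreover from this have "v i \<in> U i \<inter> U j"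
      using center_in_cell by (metis IntI lessThan_iff)
    ultimately show False
      using disjoint_cells by (auto simp: disjoint_family_on_def)
  qed
  moreover have "v ` {..<n} \<subseteq> {x, y}"
    using center_in_sphere xy by auto
  ultimately have "card {..<n} \<le> card {x, y}"
    by (intro card_inj_on_le) auto
  also have "\<dots> \<le> 2"
    by (simp add: card_insert_le_m1)
  finally show ?thesis
    by simp
next
  case False
  then have "2 \<le> DIM('a)"
    using DIM_positive[where 'a='a] by linarith
  then obtain z :: "nat \<Rightarrow> 'a" where z: "\<And>k. k \<le> 2 * m \<Longrightarrow> z k \<in> sphere 0 1"
    "\<And>k l. k \<noteq> l \<Longrightarrow> 1 / real m \<le> dist (z k) (z l)"
    using sphere_separated_points m(1) by blast
  have "2 * m + 1 \<le> n"
  proof (rule card_le_of_separated_points[where z = z and U = U and \<delta> = \<delta>])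
    show "z k \<in> (\<Union>i<n. U i)" if "k < 2 * m + 1" for k
      using z(1)[of k] that cells_cover by simp
    show "\<delta> \<le> dist (z k) (z l)" if "k \<noteq> l" for k l
      using z(2)[OF that] m(2) by linarith
  qed (rule dist_in_cell)
  then show ?thesis
    by simp
qed

lemma sum_measure_cells_le:
  assumes "finite_measure \<mu>" "sets \<mu> = sets borel"
  shows "(\<Sum>i<n. measure \<mu> (U i)) \<le> measure \<mu> UNIV"
proof -
  interpret finite_measure \<mu>
    by fact
  have "(\<Sum>i<n. measure \<mu> (U i)) = measure \<mu> (\<Union>i<n. U i)"
    using disjoint_cells sets_cell assms(2)
    by (intro finite_measure_finite_Union[symmetric]) auto
  also have "\<dots> \<le> measure \<mu> UNIV"
    using assms(2) sets_cell by (intro finite_measure_mono) auto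
  finally show ?thesis .
qed

lemma integral_pos_pow_le_cell_sum:
  fixes \<mu> :: "'a measure"
  assumes \<mu>: "finite_borel_measure_on_sphere \<mu>" and p: "0 < p" "p \<le> 1"
    and u: "u \<in> sphere 0 1"
  shows "(\<integral>w. pos_pow p (u \<bullet> w) \<partial>\<mu>)
       \<le> (\<Sum>i<n. measure \<mu> (U i) * (pos_pow p (u \<bullet> v i) + \<delta> powr p))"
proof -
  interpret finite_measure \<mu>
    using \<mu> by (simp add: finite_borel_measure_on_sphere_def)
  have sets: "sets \<mu> = sets borel"
    using \<mu> by (simp add: finite_borel_measure_on_sphere_def)
  define g where "g x = (\<Sum>i<n. (pos_pow p (u \<bullet> v i) + \<delta> powr p) * indicator (U i) x)" for x
  have "AE x in \<mu>. pos_pow p (u \<bullet> x) \<le> g x"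
    using AE_in_sphere[OF \<mu>]
  proof eventually_elim
    case (elim x)
    then obtain j where j: "j < n" "x \<in> U j"
      using cells_cover by blast
    have "\<bar>u \<bullet> x - u \<bullet> v j\<bar> \<le> dist x (v j)"
      using Cauchy_Schwarz_ineq2[of u "x - v j"] u by (simp add: inner_diff_right dist_norm)
    also have "\<dots> < \<delta>"
      using j center_in_cell by (intro dist_in_cell) auto
    finally have "\<bar>u \<bullet> x - u \<bullet> v j\<bar> powr p \<le> \<delta> powr p"
      using p by (intro powr_mono2) auto
    then have "pos_pow p (u \<bullet> x) \<le> (pos_pow p (u \<bullet> v j) + \<delta> powr p) * indicator (U j) x"
      using pos_pow_le_add_abs_diff_powr[OF p, of "u \<bullet> x" "u \<bullet> v j"] j by simp
    also have "\<dots> \<le> g x"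
      unfolding g_def using j by (intro member_le_sum) (auto simp: pos_pow_nonneg)
    finally show ?case .
  qed
  moreover have "integrable \<mu> g"
    unfolding g_def using sets_cell sets
    by (intro Bochner_Integration.integrable_sum) (auto simp: less_top[symmetric])
  ultimately have "(\<integral>w. pos_pow p (u \<bullet> w) \<partial>\<mu>) \<le> integral\<^sup>L \<mu> g"
    using \<mu> p u by (intro integral_mono_AE integrable_pos_pow_inner) auto
  also have "integral\<^sup>L \<mu> g = (\<Sum>i<n. measure \<mu> (U i) * (pos_pow p (u \<bullet> v i) + \<delta> powr p))"
    unfolding g_def using sets_cell sets
    by (subst Bochner_Integration.integral_sum) (auto simp: less_top[symmetric] mult.commute)
  finally show ?thesis .
qed

lemma sum_pos_pow_centers_ge:
  assumes p: "0 < p" "p \<le> 1" and u: "u \<in> sphere 0 1"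
  shows "1 - \<delta> \<le> (\<Sum>i<n. pos_pow p (u \<bullet> v i))"
proof -
  obtain j where j: "j < n" "dist u (v j) < \<delta>"
    using exists_near_center[OF u] .
  have "1 - \<delta> \<le> u \<bullet> v j"
    using inner_ge_1_minus_dist[of u "v j"] u center_in_sphere[OF j(1)] j(2) by simp
  also have "\<dots> \<le> pos_pow p (u \<bullet> v j)"
    using p norm_cauchy_schwarz[of u "v j"] u center_in_sphere[OF j(1)] by (intro le_pos_pow) auto
  also have "\<dots> \<le> (\<Sum>i<n. pos_pow p (u \<bullet> v i))"
    using j(1) by (intro member_le_sum) (auto simp: pos_pow_nonneg)
  finally show ?thesis .
qed

lemma integral_discretized_measure_ge:
  fixes \<mu> :: "'a measure"
  assumes \<mu>: "finite_borel_measure_on_sphere \<mu>" and p: "0 < p" "p \<le> 1"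
    and C: "0 < C" "\<forall>u\<in>sphere 0 1. C \<le> (\<integral>w. pos_pow p (u \<bullet> w) \<partial>\<mu>)"
    and \<delta>: "\<delta> \<le> C / 2" "\<delta> powr p * measure \<mu> UNIV \<le> C / 4"
    and n: "n \<le> 2 \<or> 2 \<le> measure \<mu> UNIV * n"
    and u: "u \<in> sphere 0 1"
  shows "C / 2 \<le> (\<integral>w. pos_pow p (u \<bullet> w)
            \<partial>scale_measure (ennreal (measure \<mu> UNIV / (\<Sum>i<n. measure \<mu> (U i) + 1 / (real n)\<^sup>2)))
              (discrete_measure n v (\<lambda>i. measure \<mu> (U i) + 1 / (real n)\<^sup>2)))"
proof -
  define s where "s = measure \<mu> UNIV"
  define T where "T = (\<Sum>i<n. measure \<mu> (U i))"
  define A where "A = (\<Sum>i<n. measure \<mu> (U i) * pos_pow p (u \<bullet> v i))"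
  define B where "B = (\<Sum>i<n. pos_pow p (u \<bullet> v i))"
  have T: "0 \<le> T" "T \<le> s"
    using \<mu> sum_measure_cells_le[of \<mu>]
    by (auto simp: T_def s_def finite_borel_measure_on_sphere_def intro: sum_nonneg)
  have C_le: "C \<le> (\<integral>w. pos_pow p (u \<bullet> w) \<partial>\<mu>)"
    using C u by blast
  also have "\<dots> \<le> s"
    unfolding s_def using \<mu> p u by (intro integral_pos_pow_inner_le) auto
  finally have "C \<le> s" .
  have "C \<le> A + \<delta> powr p * T"
    using C_le integral_pos_pow_le_cell_sum[OF \<mu> p u]
    by (simp add: A_def T_def algebra_simps sum.distrib sum_distrib_left)
  also have "\<dots> \<le> A + \<delta> powr p * s"
    using T by (simp add: mult_left_mono)
  finally have "C - \<delta> powr p * s \<le> A"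
    by simp
  moreover have "1 - \<delta> \<le> B" "0 \<le> B"
    unfolding B_def using sum_pos_pow_centers_ge[OF p u] by (auto intro: sum_nonneg pos_pow_nonneg)
  moreover obtain j where "dist u (v j) < \<delta>"
    using exists_near_center[OF u] .
  then have "0 \<le> \<delta>"
    using zero_le_dist[of u "v j"] by linarith
  ultimately have "C / 2 \<le> s / (T + 1 / n) * (A + B / (real n)\<^sup>2)"
    using n_pos n \<delta> T C \<open>C \<le> s\<close> by (intro discretization_bound_arith) (auto simp: s_def)
  also have "\<dots> = (\<integral>w. pos_pow p (u \<bullet> w)
            \<partial>scale_measure (ennreal (s / (\<Sum>i<n. measure \<mu> (U i) + 1 / (real n)\<^sup>2)))
              (discrete_measure n v (\<lambda>i. measure \<mu> (U i) + 1 / (real n)\<^sup>2)))"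
    unfolding A_def B_def T_def using n_pos T
    by (subst integral_normalized_perturbed_discrete_measure) (auto simp: pos_pow_def s_def)
  finally show ?thesis
    by (simp add: s_def)
qed

end

lemma sphere_partition_of_diameter:
  fixes U :: "nat \<Rightarrow> 'a::euclidean_space set"
  assumes "\<And>i. i < n \<Longrightarrow> U i \<in> sets borel"
    and "\<And>i j. i < n \<Longrightarrow> j < n \<Longrightarrow> i \<noteq> j \<Longrightarrow> U i \<inter> U j = {}"
    and cover: "(\<Union>i<n. U i) = sphere 0 1"
    and diam: "\<And>i. i < n \<Longrightarrow> diameter (U i) < \<delta>"
    and "\<And>i. i < n \<Longrightarrow> v i \<in> U i"
  shows "sphere_partition n U v \<delta>"
proof
  fix i x y
  assume i: "i < n" and xy: "x \<in> U i" "y \<in> U i"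
  have "U i \<subseteq> sphere 0 1"
    using cover i by blast
  then have "bounded (U i)"
    using bounded_sphere bounded_subset by blast
  then have "dist x y \<le> diameter (U i)"
    using xy by (rule diameter_bounded_bound)
  with diam[OF i] show "dist x y < \<delta>"
    by linarith
qed (use assms in \<open>auto simp: disjoint_family_on_def\<close>)

theorem lemma5p5:
  fixes \<mu> :: "'a::euclidean_space measure"
    and p C :: real
    and N :: "nat \<Rightarrow> nat"
    and U :: "nat \<Rightarrow> nat \<Rightarrow> 'a set"
    and v :: "nat \<Rightarrow> nat \<Rightarrow> 'a"
  assumes p: "0 < p" "p < 1"
    and mu: "finite_borel_measure_on_sphere \<mu>"
    and nc: "not_concentrated_in_hemisphere \<mu>"
    and C_pos: "C > 0"
    and C_bound: "\<forall>u\<in>sphere 0 1. (\<integral>w. pos_pow p (u \<bullet> w) \<partial>\<mu>) \<ge> C"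
    and part_borel: "\<forall>m\<ge>1. \<forall>i<N m. U m i \<in> sets borel"
    and part_disj: "\<forall>m\<ge>1. \<forall>i<N m. \<forall>j<N m. i \<noteq> j \<longrightarrow> U m i \<inter> U m j = {}"
    and part_cover: "\<forall>m\<ge>1. (\<Union>i<N m. U m i) = sphere 0 1"
    and part_diam: "\<forall>m\<ge>1. \<forall>i<N m. diameter (U m i) < 1 / real m"
    and part_int: "\<forall>m\<ge>1. \<forall>i<N m. (top_of_set (sphere 0 1)) interior_of (U m i) \<noteq> {}"
    and v_in: "\<forall>m\<ge>1. \<forall>i<N m. v m i \<in> U m i"
    and v_gp: "\<forall>m\<ge>1. general_position (v m) {..<N m}"
  shows "\<forall>\<^sub>F m in sequentially.
           \<forall>u\<in>sphere 0 1.
             (\<integral>w. pos_pow p (u \<bullet> w)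
                \<partial>(scale_measure
                    (ennreal (measure \<mu> UNIV /
                       (\<Sum>i<N m. measure \<mu> (U m i) + 1 / (real (N m))\<^sup>2)))
                    (discrete_measure (N m) (v m)
                       (\<lambda>i. measure \<mu> (U m i) + 1 / (real (N m))\<^sup>2))))
             \<ge> C / 2"
proof -
  define s where "s = measure \<mu> UNIV"
  obtain b :: 'a where b: "b \<in> Basis"
    using nonempty_Basis by blast
  then have "C \<le> (\<integral>w. pos_pow p (b \<bullet> w) \<partial>\<mu>)"
    using C_bound by simp
  also have "\<dots> \<le> s"
    unfolding s_def using b by (intro integral_pos_pow_inner_le[OF mu p(1)]) simp
  finally have "C \<le> s" .
  have s: "0 < s"
    using C_pos \<open>C \<le> s\<close> by linarith
  have "\<forall>\<^sub>F m in sequentially. 1 / real m < C / 2"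
    by (rule order_tendstoD(2)[OF lim_1_over_n]) (use C_pos in simp)
  moreover have "\<forall>\<^sub>F m in sequentially. 1 / real m < s"
    by (rule order_tendstoD(2)[OF lim_1_over_n]) (use s in simp)
  moreover have "((\<lambda>m. (1 / real m) powr p * s) \<longlongrightarrow> 0) sequentially"
    using p by (auto intro!: tendsto_eq_intros lim_1_over_n)
  then have "\<forall>\<^sub>F m in sequentially. (1 / real m) powr p * s < C / 4"
    by (rule order_tendstoD(2)) (use C_pos in simp)
  moreover have "\<forall>\<^sub>F m in sequentially. 0 < m"
    by (rule eventually_gt_at_top)
  ultimately have "\<forall>\<^sub>F m in sequentially.
      0 < m \<and> 1 / real m \<le> C / 2 \<and> 1 / real m \<le> s \<and> (1 / real m) powr p * s \<le> C / 4"
    by eventually_elim auto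
  then show ?thesis
  proof eventually_elim
    case (elim m)
    then have m: "1 \<le> m" "1 \<le> s * m"
      by (auto simp: field_simps)
    interpret sphere_partition "N m" "U m" "v m" "1 / real m"
      using part_borel part_disj part_cover part_diam v_in m(1)
      by (intro sphere_partition_of_diameter) auto
    have "N m \<le> 2 \<or> 2 * m < N m"
      using elim by (intro n_le_2_or_2m_less_n) auto
    moreover have "2 \<le> s * N m" if "2 * m < N m"
    proof -
      have "2 * (s * m) \<le> s * N m"
        using that s mult_left_mono[of "2 * real m" "N m" s] by simp
      then show ?thesis
        using m(2) by linarith
    qed
    ultimately have "N m \<le> 2 \<or> 2 \<le> measure \<mu> UNIV * N m"
      unfolding s_def by blast
    then show ?case
      using integral_discretized_measure_ge[OF mu p(1) _ C_pos] p C_bound elim by (simp add: s_def)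
  qed
qed

end
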